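(* Let $g(\alpha,\beta,\gamma)=\gamma^{3/2}+\min\big(0.465,\frac{3\alpha\beta}{\alpha+\beta},3\alpha\sqrt\beta\big)$, where $\frac{\alpha\beta}{\alpha+\beta}:=0$ if $(\alpha,\beta)=(0,0)$, and $f(\alpha,\beta,\gamma,\delta)=\min\big(2\delta^{3/2}+g(\alpha,\beta,\gamma),\tfrac14+\tfrac34g(\alpha,\beta,\gamma)\big)$. If $\alpha,\beta,\gamma,\delta$ are nonnegative real numbers with $2\alpha+\beta+\gamma+2\delta=1$ and $\gamma\le\alpha$, then $f(\alpha,\beta,\gamma,\delta)\le\frac12$, with equality if and only if $(\alpha,\beta,\gamma,\delta)=(\frac14,\frac14,\frac14,0)$. *)

theory Defs
  imports Complex_Main
begin

definition hm :: "real \<Rightarrow> real \<Rightarrow> real" where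
  "hm a b = (if a = 0 \<and> b = 0 then 0 else a * b / (a + b))"

definition g :: "real \<Rightarrow> real \<Rightarrow> real \<Rightarrow> real" where
  "g a b c = c powr (3/2) + min 0.465 (min (3 * hm a b) (3 * a * sqrt b))"

definition f :: "real \<Rightarrow> real \<Rightarrow> real \<Rightarrow> real \<Rightarrow> real" where
  "f a b c d = min (2 * d powr (3/2) + g a b c) (1/4 + 3/4 * g a b c)"

end

theory Submission
  imports Defs "HOL-Analysis.Convex"
begin

text \<open>
  Write \<open>F x = x * sqrt x\<close>, so that \<open>g a b c = F c + min_term a b\<close>. For \<open>d \<le> 4/25\<close> we show
  \<open>2 F d + g a b c + d / 5 \<le> 1/2\<close>: with \<open>u = c + 2 d\<close> fixed, the left-hand side is convex in \<open>c\<close>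
  because \<open>F\<close> is, so it suffices to check the faces \<open>c = 0\<close>, \<open>d = 4/25\<close>, \<open>c = a\<close> and \<open>d = 0\<close>.
  Each face is an inequality in two parameters, settled by AM-GM, monotonicity of
  \<open>hm a b\<close> and \<open>a * sqrt b\<close> along the lines \<open>2 a + b = const\<close>, and secant bounds for \<open>F\<close>.
  The slack \<open>d / 5\<close> makes the bound strict for \<open>d > 0\<close>; for \<open>d > 4/25\<close> the second branch
  of \<open>f\<close> is small because then \<open>g \<le> 0.33\<close>; and on the face \<open>d = 0\<close> the value
  \<open>g = 1/2\<close> is attained only at \<open>(1/4, 1/4, 1/4)\<close>.
\<close>

section \<open>The function \<open>x * sqrt x\<close>\<close>

lemma powr_three_halves: "0 \<le> x \<Longrightarrow> x powr (3/2) = x * sqrt x" for x :: real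
  by (cases "x = 0") (simp_all add: powr_add [of x 1 "1/2", simplified] powr_half_sqrt)

lemma mult_sqrt_le_mult:
  fixes x q :: real
  assumes "0 \<le> x" "0 \<le> q" "x \<le> q\<^sup>2"
  shows "x * sqrt x \<le> x * q"
proof -
  have "sqrt x \<le> sqrt (q\<^sup>2)"
    using assms(3) by (rule real_sqrt_le_mono)
  then show ?thesis
    using assms(1,2) by (simp add: mult_left_mono)
qed

lemma mult_sqrt_chord:
  fixes x1 x x2 :: real
  assumes "0 \<le> x1" "x1 \<le> x" "x \<le> x2"
  shows "(x2 - x1) * (x * sqrt x) \<le> (x2 - x) * (x1 * sqrt x1) + (x - x1) * (x2 * sqrt x2)"
proof -
  define L X R where "L = sqrt x1" and "X = sqrt x" and "R = sqrt x2"
  have "0 \<le> L" "L \<le> X" "X \<le> R"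
    using assms by (simp_all add: L_def X_def R_def)
  moreover have "x1 = L\<^sup>2" "x = X\<^sup>2" "x2 = R\<^sup>2"
    using assms by (simp_all add: L_def X_def R_def)
  ultimately have "(x2 - x) * (x1 * L) + (x - x1) * (x2 * R) - (x2 - x1) * (x * X)
      = (R - L) * (X - L) * (R - X) * ((R + L) * X + L * R)"
    by (simp add: power2_eq_square algebra_simps)
  moreover have "0 \<le> (R - L) * (X - L) * (R - X) * ((R + L) * X + L * R)"
    using \<open>0 \<le> L\<close> \<open>L \<le> X\<close> \<open>X \<le> R\<close> by simp
  ultimately show ?thesis
    by (simp add: L_def X_def R_def)
qed

lemma convex_on_mult_sqrt: "convex_on {0..} (\<lambda>x::real. x * sqrt x)"
proof (rule convex_on_linorderI)
  fix t x y :: real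
  assume t: "0 < t" "t < 1" and xy: "x \<in> {0..}" "y \<in> {0..}" "x < y"
  define z where "z = (1 - t) * x + t * y"
  have "t * x \<le> t * y" "(1 - t) * x \<le> (1 - t) * y"
    using t xy by (simp_all add: mult_left_mono)
  then have "x \<le> z" "z \<le> y"
    by (simp_all add: z_def algebra_simps)
  then have "(y - x) * (z * sqrt z) \<le> ((1 - t) * (x * sqrt x) + t * (y * sqrt y)) * (y - x)"
    using mult_sqrt_chord [of x z y] xy by (simp add: z_def algebra_simps)
  then show "((1 - t) *\<^sub>R x + t *\<^sub>R y) * sqrt ((1 - t) *\<^sub>R x + t *\<^sub>R y)
      \<le> (1 - t) * (x * sqrt x) + t * (y * sqrt y)"
    using xy by (simp add: z_def mult.commute)
qed simp

lemma mult_sqrt_le_secant: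
  fixes x1 x x2 q1 q2 :: real
  assumes "0 \<le> x1" "x1 \<le> x" "x \<le> x2"
    and "0 \<le> q1" "x1 \<le> q1\<^sup>2" "0 \<le> q2" "x2 \<le> q2\<^sup>2"
  shows "(x2 - x1) * (x * sqrt x) \<le> (x2 - x) * (x1 * q1) + (x - x1) * (x2 * q2)"
proof -
  have "(x2 - x) * (x1 * sqrt x1) \<le> (x2 - x) * (x1 * q1)"
    using assms by (intro mult_left_mono mult_sqrt_le_mult) auto
  moreover have "(x - x1) * (x2 * sqrt x2) \<le> (x - x1) * (x2 * q2)"
    using assms by (intro mult_left_mono mult_sqrt_le_mult) auto
  ultimately show ?thesis
    using mult_sqrt_chord [OF assms(1-3)] by linarith
qed

lemma convex_on_compose_affine:
  fixes f h :: "real \<Rightarrow> real"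
  assumes "convex_on S f" "convex T" "\<And>x. x \<in> T \<Longrightarrow> h x \<in> S"
    and "\<And>t x y. h ((1 - t) * x + t * y) = (1 - t) * h x + t * h y"
  shows "convex_on T (\<lambda>x. f (h x))"
proof (rule convex_onI)
  fix t x y :: real
  assume "0 < t" "t < 1" "x \<in> T" "y \<in> T"
  then show "f (h ((1 - t) *\<^sub>R x + t *\<^sub>R y)) \<le> (1 - t) * f (h x) + t * f (h y)"
    using convex_onD [OF assms(1), of t "h x" "h y"] assms(3,4) by simp
qed (fact assms(2))

lemma mult_sqrt_le_amgm:
  fixes a b :: real
  assumes "0 \<le> a" "0 \<le> b"
  shows "a * sqrt b \<le> (2 * a + b) / 3 * sqrt ((2 * a + b) / 3)"
proof -
  define m where "m = (2 * a + b) / 3"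
  have "m ^ 3 - a\<^sup>2 * b = (a - b)\<^sup>2 * (8 * a + b) / 27"
    by (simp add: m_def power2_eq_square power3_eq_cube field_simps)
  also have "\<dots> \<ge> 0"
    using assms by simp
  finally have "sqrt (a\<^sup>2 * b) \<le> sqrt (m\<^sup>2 * m)"
    by (intro real_sqrt_le_mono) (simp add: power2_eq_square power3_eq_cube)
  moreover have "0 \<le> m"
    using assms by (simp add: m_def)
  ultimately show ?thesis
    using assms by (simp add: real_sqrt_mult m_def [symmetric])
qed

section \<open>The minimum term of \<open>g\<close>\<close>

definition min_term :: "real \<Rightarrow> real \<Rightarrow> real" where
  "min_term a b = min 0.465 (min (3 * hm a b) (3 * a * sqrt b))"

lemma g_eq_min_term: "0 \<le> c \<Longrightarrow> g a b c = c * sqrt c + min_term a b"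
  by (simp add: g_def min_term_def powr_three_halves)

lemma min_term_le_cap: "min_term a b \<le> 93/200"
  and min_term_le_hm: "min_term a b \<le> 3 * hm a b"
  and min_term_le_sqrt: "min_term a b \<le> 3 * a * sqrt b"
  by (simp_all add: min_term_def)

lemma hm_eq_divide: "0 \<le> a \<Longrightarrow> 0 \<le> b \<Longrightarrow> 0 < a + b \<Longrightarrow> hm a b = a * b / (a + b)"
  by (auto simp: hm_def)

text \<open>The optimal constant is \<open>3 (3 - 2 sqrt 2) \<approx> 0.51472\<close>, attained at \<open>a = b / sqrt 2\<close>.\<close>
lemma hm_le_linear:
  fixes a b :: real
  assumes "0 \<le> a" "0 \<le> b"
  shows "3 * hm a b \<le> 1287/2500 * (2 * a + b)"
proof (cases "a + b = 0")
  case True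
  with assms show ?thesis
    by (simp add: hm_def)
next
  case False
  with assms have "0 < a + b"
    by simp
  have "2500 * (1287/2500 * (2 * a + b) * (a + b) - 3 * (a * b))
      = 2574 * (a - 3639/5148 * b)\<^sup>2 + 8631/10296 * b\<^sup>2"
    by (simp add: power2_eq_square field_simps)
  also have "\<dots> \<ge> 0"
    by simp
  finally show ?thesis
    using \<open>0 < a + b\<close> assms by (simp add: hm_eq_divide pos_divide_le_eq)
qed

text \<open>\<open>a * (K - 2 * a) / (K - a)\<close> is \<open>hm a b\<close> on the line \<open>2 * a + b = K\<close>.\<close>
lemma hm_line_strict_antimono:
  fixes a0 a K :: real
  assumes "0 \<le> a0" "a0 < a" "a < K" "K\<^sup>2 - 2 * K * (a0 + a) + 2 * a0 * a < 0"
  shows "a * (K - 2 * a) / (K - a) < a0 * (K - 2 * a0) / (K - a0)"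
proof -
  have "0 < K - a" "0 < K - a0"
    using assms by simp_all
  then have "a0 * (K - 2 * a0) / (K - a0) - a * (K - 2 * a) / (K - a)
      = (a0 - a) * (K\<^sup>2 - 2 * K * (a0 + a) + 2 * a0 * a) / ((K - a0) * (K - a))"
    by (simp add: field_simps) (simp add: power2_eq_square algebra_simps)
  also have "\<dots> > 0"
    using assms \<open>0 < K - a\<close> \<open>0 < K - a0\<close> by (intro divide_pos_pos mult_neg_neg mult_pos_pos) auto
  finally show ?thesis
    by simp
qed

lemma sqrt_line_strict_mono:
  fixes a a0 K :: real
  assumes "0 \<le> a" "a < a0" "3 * a0 \<le> K"
  shows "a * sqrt (K - 2 * a) < a0 * sqrt (K - 2 * a0)"
proof -
  have "3 * a0 * (a0 + a) \<le> K * (a0 + a)"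
    using assms by (intro mult_right_mono) auto
  moreover have "0 < (a0 - a) * (a0 + 2 * a)"
    using assms by (intro mult_pos_pos) auto
  ultimately have "0 < K * (a0 + a) - 2 * (a0\<^sup>2 + a0 * a + a\<^sup>2)"
    by (simp add: power2_eq_square algebra_simps)
  then have "0 < (a0 - a) * (K * (a0 + a) - 2 * (a0\<^sup>2 + a0 * a + a\<^sup>2))"
    using assms by simp
  then have "a\<^sup>2 * (K - 2 * a) < a0\<^sup>2 * (K - 2 * a0)"
    by (simp add: power2_eq_square algebra_simps)
  then have "sqrt (a\<^sup>2 * (K - 2 * a)) < sqrt (a0\<^sup>2 * (K - 2 * a0))"
    by (rule real_sqrt_less_mono)
  then show ?thesis
    using assms by (simp add: real_sqrt_mult)
qed

section \<open>The face \<open>d = 0\<close>\<close>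

lemma g_less_half_small_c:
  fixes a b c :: real
  assumes "0 \<le> a" "0 \<le> b" "0 \<le> c" "2 * a + b + c = 1" "c < 441/2500"
  shows "g a b c < 1/2"
proof -
  define r where "r = sqrt c"
  have "0 \<le> r" "c = r\<^sup>2" "c * sqrt c = r ^ 3"
    using assms(3) by (simp_all add: r_def power2_eq_square power3_eq_cube)
  have "r < sqrt (441/2500)"
    using assms(5) by (simp add: r_def)
  moreover have "sqrt (441/2500) = (21/50 :: real)"
    by (simp add: real_sqrt_divide)
  ultimately have "r < 21/50"
    by simp
  consider "r \<le> 327/1000" | "327/1000 < r"
    by linarith
  then have "r ^ 3 + min_term a b < 1/2"
  proof cases
    case 1
    then have "r ^ 3 \<le> (327/1000) ^ 3"
      using \<open>0 \<le> r\<close> by (rule power_mono)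
    then show ?thesis
      using min_term_le_cap [of a b] by (simp add: power_divide)
  next
    case 2
    have "r ^ 3 + 1287/2500 * (1 - r\<^sup>2) - 1/2
        = (r - 327/1000) * (r - 21/50) * (r + 1161/5000) + (180567/5000000 * r - 4272587/250000000)"
      by (simp add: power2_eq_square power3_eq_cube field_simps)
    moreover have "(r - 327/1000) * (r - 21/50) * (r + 1161/5000) \<le> 0"
      using 2 \<open>r < 21/50\<close> \<open>0 \<le> r\<close> by (intro mult_nonpos_nonneg mult_nonneg_nonpos) auto
    moreover have "min_term a b \<le> 1287/2500 * (1 - r\<^sup>2)"
      using min_term_le_hm [of a b] hm_le_linear [OF assms(1,2)] assms(4) \<open>c = r\<^sup>2\<close> by simp
    ultimately show ?thesis
      using \<open>r < 21/50\<close> by linarith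
  qed
  then show ?thesis
    using assms(3) \<open>c * sqrt c = r ^ 3\<close> by (simp add: g_eq_min_term)
qed

lemma large_c_polynomial_bound:
  fixes r :: real
  assumes "1/2 < r" "3 * r\<^sup>2 \<le> 1"
  shows "r ^ 3 + 3 * r\<^sup>2 * (1 - 3 * r\<^sup>2) / (1 - 2 * r\<^sup>2) < 1/2"
proof -
  have "0 < 1 - 2 * r\<^sup>2"
    using assms(2) by simp
  have "1/8 < r ^ 3"
    using power_strict_mono [of "1/2" r 3] assms(1) by (simp add: power_divide)
  moreover have "r < 2 * r\<^sup>2"
    using assms(1) by (simp add: power2_eq_square)
  moreover have "0 \<le> r ^ 4"
    by simp
  ultimately have "0 < 2 * r ^ 4 + 10 * r ^ 3 + 4 * r\<^sup>2 - 2 * r - 1"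
    by linarith
  then have "0 < (r - 1/2) * (2 * r ^ 4 + 10 * r ^ 3 + 4 * r\<^sup>2 - 2 * r - 1)"
    using assms(1) by simp
  also have "\<dots> = (1/2 - r ^ 3) * (1 - 2 * r\<^sup>2) - 3 * r\<^sup>2 * (1 - 3 * r\<^sup>2)"
    by (simp add: power2_eq_square power3_eq_cube power4_eq_xxxx algebra_simps)
  finally have "3 * r\<^sup>2 * (1 - 3 * r\<^sup>2) / (1 - 2 * r\<^sup>2) < 1/2 - r ^ 3"
    using \<open>0 < 1 - 2 * r\<^sup>2\<close> by (simp add: pos_divide_less_eq)
  then show ?thesis
    by simp
qed

lemma hm_line_le_diagonal:
  fixes a c :: real
  assumes "1/4 < c" "c \<le> 1/3" "c \<le> a" "a < 1 - c"
  shows "a * (1 - c - 2 * a) / (1 - c - a) \<le> c * (1 - 3 * c) / (1 - 2 * c)"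
proof (cases "a = c")
  case False
  define K where "K = 1 - c"
  have "K\<^sup>2 - 4 * K * c + 2 * c\<^sup>2 = 7 * ((c - 1/4) * (c - 1/3)) + (5/12 - 23/12 * c)"
    by (simp add: K_def power2_eq_square algebra_simps)
  moreover have "(c - 1/4) * (c - 1/3) \<le> 0"
    using assms(1,2) by (intro mult_nonneg_nonpos) auto
  moreover have "K\<^sup>2 - 2 * K * (c + a) + 2 * c * a = (K\<^sup>2 - 4 * K * c + 2 * c\<^sup>2) - 2 * ((a - c) * (K - c))"
    by (simp add: power2_eq_square algebra_simps)
  moreover have "0 \<le> (a - c) * (K - c)"
    using assms by (simp add: K_def)
  ultimately have "K\<^sup>2 - 2 * K * (c + a) + 2 * c * a < 0"
    using assms(1) by linarith
  then have "a * (K - 2 * a) / (K - a) < c * (K - 2 * c) / (K - c)"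
    using False assms by (intro hm_line_strict_antimono) (auto simp: K_def)
  then show ?thesis
    by (simp add: K_def)
qed simp

lemma g_less_half_large_c:
  fixes a b c :: real
  assumes "0 \<le> b" "2 * a + b + c = 1" "c \<le> a" "1/4 < c"
  shows "g a b c < 1/2"
proof -
  have "c \<le> 1/3" "0 < a + b" "b = 1 - c - 2 * a"
    using assms by simp_all
  then have "hm a b = a * (1 - c - 2 * a) / (1 - c - a)"
    using assms by (simp add: hm_eq_divide \<open>b = 1 - c - 2 * a\<close>)
  also have "\<dots> \<le> c * (1 - 3 * c) / (1 - 2 * c)"
    using assms \<open>c \<le> 1/3\<close> \<open>0 < a + b\<close> by (intro hm_line_le_diagonal) simp_all
  finally have "min_term a b \<le> 3 * c * (1 - 3 * c) / (1 - 2 * c)"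
    using min_term_le_hm [of a b] by simp
  moreover have "sqrt (1/4) < sqrt c"
    using assms(4) by (rule real_sqrt_less_mono)
  then have "sqrt c ^ 3 + 3 * (sqrt c)\<^sup>2 * (1 - 3 * (sqrt c)\<^sup>2) / (1 - 2 * (sqrt c)\<^sup>2) < 1/2"
    using assms(4) \<open>c \<le> 1/3\<close> by (intro large_c_polynomial_bound) (simp_all add: real_sqrt_divide)
  moreover have "c * sqrt c = sqrt c ^ 3" "(sqrt c)\<^sup>2 = c"
    using assms(4) by (simp_all add: power3_eq_cube)
  ultimately show ?thesis
    using assms(4) by (simp add: g_eq_min_term)
qed

lemma sqrt_line_less_crossing:
  fixes r a :: real
  assumes "r \<le> 1/2" "0 \<le> a" "a < r - r\<^sup>2"
  shows "a * sqrt (1 - r\<^sup>2 - 2 * a) < r * (1 - r)\<^sup>2"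
proof -
  have "0 \<le> (1 - 2 * r) * (1 - r)"
    using assms(1) by simp
  then have "3 * (r - r\<^sup>2) \<le> 1 - r\<^sup>2"
    by (simp add: power2_eq_square algebra_simps)
  then have "a * sqrt (1 - r\<^sup>2 - 2 * a) < (r - r\<^sup>2) * sqrt (1 - r\<^sup>2 - 2 * (r - r\<^sup>2))"
    using assms by (intro sqrt_line_strict_mono)
  moreover have "1 - r\<^sup>2 - 2 * (r - r\<^sup>2) = (1 - r)\<^sup>2"
    by (simp add: power2_eq_square algebra_simps)
  then have "sqrt (1 - r\<^sup>2 - 2 * (r - r\<^sup>2)) = 1 - r"
    using assms(1) by simp
  ultimately have "a * sqrt (1 - r\<^sup>2 - 2 * a) < (r - r\<^sup>2) * (1 - r)"
    by (simp only:)
  also have "\<dots> = r * (1 - r)\<^sup>2"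
    by (simp add: power2_eq_square algebra_simps)
  finally show ?thesis .
qed

lemma hm_line_less_crossing:
  fixes r a :: real
  assumes "21/50 \<le> r" "r \<le> 1/2" "r - r\<^sup>2 < a" "a < 1 - r\<^sup>2"
  shows "a * (1 - r\<^sup>2 - 2 * a) / (1 - r\<^sup>2 - a) < r * (1 - r)\<^sup>2"
proof -
  define K a1 where "K = 1 - r\<^sup>2" and "a1 = r - r\<^sup>2"
  have "K - 2 * a1 = (1 - r)\<^sup>2" "K - a1 = 1 - r"
    by (simp_all add: K_def a1_def power2_eq_square algebra_simps)
  have "21/50 * r \<le> r\<^sup>2"
    using assms(1) mult_right_mono [of "21/50" r r] by (simp add: power2_eq_square)
  then have "1 - 2 * r - r\<^sup>2 < 0"
    using assms(1) by linarith
  then have "(1 - r)\<^sup>2 * (1 - 2 * r - r\<^sup>2) \<le> 0"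
    by (simp add: mult_nonneg_nonpos)
  moreover have "0 < (a - a1) * (K - a1)"
    using assms(2,3) \<open>K - a1 = 1 - r\<close> by (simp add: a1_def)
  moreover have "K\<^sup>2 - 2 * K * (a1 + a) + 2 * a1 * a
      = (1 - r)\<^sup>2 * (1 - 2 * r - r\<^sup>2) - 2 * ((a - a1) * (K - a1))"
    by (simp add: K_def a1_def power2_eq_square algebra_simps)
  ultimately have "K\<^sup>2 - 2 * K * (a1 + a) + 2 * a1 * a < 0"
    by linarith
  moreover have "0 \<le> a1"
    using assms(1,2) mult_left_le_one_le [of r r] by (simp add: a1_def power2_eq_square)
  ultimately have "a * (K - 2 * a) / (K - a) < a1 * (K - 2 * a1) / (K - a1)"
    using assms(3,4) by (intro hm_line_strict_antimono) (simp_all add: K_def a1_def)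
  also have "\<dots> = r * (1 - r)\<^sup>2"
    unfolding \<open>K - 2 * a1 = (1 - r)\<^sup>2\<close> \<open>K - a1 = 1 - r\<close>
    using assms(2) by (simp add: a1_def power2_eq_square field_simps)
  finally show ?thesis
    by (simp add: K_def)
qed

text \<open>At \<open>a = r - r\<^sup>2\<close>, where \<open>b = (1 - r)\<^sup>2\<close>, both \<open>3 * hm a b\<close> and \<open>3 * a * sqrt b\<close> equal
  \<open>3 * r * (1 - r)\<^sup>2\<close>; along \<open>2 * a + b = 1 - r\<^sup>2\<close> the second increases before this point
  and the first decreases after it.\<close>
lemma min_term_less_crossing:
  fixes r a b :: real
  assumes "21/50 \<le> r" "r \<le> 1/2" "0 \<le> b" "r\<^sup>2 \<le> a" "2 * a + b = 1 - r\<^sup>2" "a \<noteq> r - r\<^sup>2"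
  shows "min_term a b < 3 * r * (1 - r)\<^sup>2"
proof -
  have "0 < r\<^sup>2"
    using assms(1) by simp
  then have "0 < a"
    using assms(4) by linarith
  have "b = 1 - r\<^sup>2 - 2 * a"
    using assms(5) by simp
  consider "a < r - r\<^sup>2" | "r - r\<^sup>2 < a"
    using assms(6) by fastforce
  then show ?thesis
  proof cases
    case 1
    then have "a * sqrt b < r * (1 - r)\<^sup>2"
      using assms(2) \<open>0 < a\<close> \<open>b = 1 - r\<^sup>2 - 2 * a\<close> by (simp add: sqrt_line_less_crossing)
    then show ?thesis
      using min_term_le_sqrt [of a b] by simp
  next
    case 2
    have "a < 1 - r\<^sup>2"
      using assms(3,5) \<open>0 < a\<close> by linarith
    with assms(1,2) 2 have "a * (1 - r\<^sup>2 - 2 * a) / (1 - r\<^sup>2 - a) < r * (1 - r)\<^sup>2"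
      by (intro hm_line_less_crossing)
    moreover have "hm a b = a * (1 - r\<^sup>2 - 2 * a) / (1 - r\<^sup>2 - a)"
      using \<open>0 < a\<close> assms(3) by (simp add: hm_eq_divide \<open>b = 1 - r\<^sup>2 - 2 * a\<close>)
    ultimately show ?thesis
      using min_term_le_hm [of a b] by simp
  qed
qed

lemma min_term_le_crossing:
  fixes r a b :: real
  assumes "21/50 \<le> r" "r \<le> 1/2" "0 \<le> b" "r\<^sup>2 \<le> a" "2 * a + b = 1 - r\<^sup>2"
  shows "min_term a b \<le> 3 * r * (1 - r)\<^sup>2"
proof (cases "a = r - r\<^sup>2")
  case True
  with assms(5) have "b = (1 - r)\<^sup>2"
    by (simp add: power2_eq_square algebra_simps)
  with assms(2) have "sqrt b = 1 - r"
    by simp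
  then have "3 * a * sqrt b = 3 * r * (1 - r)\<^sup>2"
    unfolding True by (simp only:) (simp add: power2_eq_square algebra_simps)
  then show ?thesis
    using min_term_le_sqrt [of a b] by simp
next
  case False
  then show ?thesis
    using min_term_less_crossing [OF assms False] by simp
qed

lemma g_less_half_middle_c:
  fixes a b c :: real
  assumes "0 \<le> b" "2 * a + b + c = 1" "c \<le> a" "441/2500 \<le> c" "c \<le> 1/4"
    and "(a, b, c) \<noteq> (1/4, 1/4, 1/4)"
  shows "g a b c < 1/2"
proof -
  define r where "r = sqrt c"
  have "0 \<le> c"
    using assms(4) by simp
  then have "c = r\<^sup>2" "c * sqrt c = r ^ 3"
    by (simp_all add: r_def power3_eq_cube)
  have "sqrt (441/2500) \<le> r" "r \<le> sqrt (1/4)"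
    using assms(4,5) by (simp_all add: r_def)
  then have "21/50 \<le> r" "r \<le> 1/2"
    by (simp_all add: real_sqrt_divide)
  have cubic: "r ^ 3 + 3 * r * (1 - r)\<^sup>2 = 1/2 + (2 * r - 1) ^ 3 / 2"
    by (simp add: power2_eq_square power3_eq_cube field_simps)
  have "r ^ 3 + min_term a b < 1/2"
  proof (cases "c = 1/4")
    case True
    have "r = 1/2"
      unfolding r_def True by (simp add: real_sqrt_divide)
    have "a \<noteq> 1/4"
      using assms(2,6) True by auto
    then have "a \<noteq> r - r\<^sup>2"
      unfolding \<open>r = 1/2\<close> by (simp add: power2_eq_square)
    then have "min_term a b < 3 * r * (1 - r)\<^sup>2"
      using assms \<open>c = r\<^sup>2\<close> \<open>21/50 \<le> r\<close> \<open>r \<le> 1/2\<close> by (intro min_term_less_crossing) auto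
    moreover have "(2 * r - 1) ^ 3 = 0"
      using \<open>r = 1/2\<close> by simp
    ultimately show ?thesis
      using cubic by linarith
  next
    case False
    with assms(5) have "r < sqrt (1/4)"
      by (simp add: r_def)
    then have "(2 * r - 1) ^ 3 < 0"
      by (simp add: real_sqrt_divide power_less_zero_eq_numeral)
    moreover have "min_term a b \<le> 3 * r * (1 - r)\<^sup>2"
      using assms \<open>c = r\<^sup>2\<close> \<open>21/50 \<le> r\<close> \<open>r \<le> 1/2\<close> by (intro min_term_le_crossing) auto
    ultimately show ?thesis
      using cubic by linarith
  qed
  then show ?thesis
    using \<open>0 \<le> c\<close> \<open>c * sqrt c = r ^ 3\<close> by (simp add: g_eq_min_term)
qed

lemma g_less_half:
  fixes a b c :: real
  assumes "0 \<le> a" "0 \<le> b" "0 \<le> c" "2 * a + b + c = 1" "c \<le> a"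
    and "(a, b, c) \<noteq> (1/4, 1/4, 1/4)"
  shows "g a b c < 1/2"
proof -
  consider "c < 441/2500" | "441/2500 \<le> c" "c \<le> 1/4" | "1/4 < c"
    by linarith
  then show ?thesis
    using assms g_less_half_small_c g_less_half_middle_c g_less_half_large_c by cases blast+
qed

lemma g_quarter: "g (1/4) (1/4) (1/4) = 1/2"
proof -
  have "sqrt (1/4) = (1/2 :: real)"
    by (simp add: real_sqrt_divide)
  then show ?thesis
    by (simp add: g_eq_min_term min_term_def hm_def)
qed

lemma g_le_half:
  fixes a b c :: real
  assumes "0 \<le> a" "0 \<le> b" "0 \<le> c" "2 * a + b + c = 1" "c \<le> a"
  shows "g a b c \<le> 1/2"
  using g_less_half [OF assms] g_quarter by fastforce

section \<open>The faces \<open>c = a\<close>, \<open>c = 0\<close> and \<open>d = 4/25\<close>\<close>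

lemma hm_add_le_shift:
  fixes a b d :: real
  assumes "113/500 < a" "0 \<le> b" "0 \<le> d" "3 * a + b + 2 * d = 1"
  shows "3 * hm a b + d \<le> 3 * hm a (b + 2 * d)"
proof -
  have "0 < a + b" "0 < a + (b + 2 * d)"
    using assms by simp_all
  have "(a + b) * (a + (b + 2 * d)) \<le> (1 - 2 * a) * (1 - 2 * a)"
    using assms by (intro mult_mono) auto
  also have "\<dots> \<le> 6 * a\<^sup>2"
  proof -
    have "113/500 * a < a * a"
      using assms(1) by (intro mult_strict_right_mono) auto
    then show ?thesis
      using assms(1) by (simp only: power2_eq_square) argo
  qed
  finally have "d * ((a + b) * (a + (b + 2 * d))) \<le> 6 * a\<^sup>2 * d"
    using assms(3) by (simp add: mult_left_mono mult.commute)
  then have "d \<le> 6 * a\<^sup>2 * d / ((a + b) * (a + (b + 2 * d)))"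
    using \<open>0 < a + b\<close> \<open>0 < a + (b + 2 * d)\<close> by (simp add: pos_le_divide_eq)
  also have "\<dots> = 3 * (a * (b + 2 * d) / (a + (b + 2 * d))) - 3 * (a * b / (a + b))"
    using \<open>0 < a + b\<close> \<open>0 < a + (b + 2 * d)\<close>
    by (simp add: field_simps) (simp add: power2_eq_square algebra_simps)
  finally show ?thesis
    using assms \<open>0 < a + b\<close> \<open>0 < a + (b + 2 * d)\<close> by (simp add: hm_eq_divide)
qed

lemma sqrt_add_le_shift:
  fixes a b d :: real
  assumes "113/500 < a" "0 \<le> b" "0 \<le> d" "3 * a + b + 2 * d = 1"
  shows "3 * a * sqrt b + d \<le> 3 * a * sqrt (b + 2 * d)"
proof -
  define s s' where "s = sqrt b" and "s' = sqrt (b + 2 * d)"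
  have "s \<le> s'"
    using assms(3) by (simp add: s_def s'_def)
  have "113/500 * a < a * a"
    using assms(1) by (intro mult_strict_right_mono) auto
  moreover have "(3 * a)\<^sup>2 = 9 * (a * a)"
    by (simp add: power2_eq_square)
  ultimately have "b + 2 * d \<le> (3 * a)\<^sup>2"
    using assms by linarith
  then have "s' \<le> sqrt ((3 * a)\<^sup>2)"
    unfolding s'_def by (rule real_sqrt_le_mono)
  also have "\<dots> = 3 * a"
    using assms(1) by (simp only: real_sqrt_abs abs_of_pos)
  finally have "s' \<le> 3 * a" .
  have "(s' - s) * (s' + s) = 2 * d"
    using assms(2,3) by (simp add: s_def s'_def algebra_simps)
  then have "6 * a * d = 3 * a * ((s' - s) * (s' + s))"
    by simp
  also have "\<dots> \<le> 3 * a * ((s' - s) * (6 * a))"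
    using \<open>s \<le> s'\<close> \<open>s' \<le> 3 * a\<close> assms(1) by (intro mult_left_mono) auto
  also have "\<dots> = 6 * a * (3 * a * s' - 3 * a * s)"
    by (simp add: algebra_simps)
  finally have "6 * a * d \<le> 6 * a * (3 * a * s' - 3 * a * s)" .
  then show ?thesis
    using assms(1) by (simp add: s_def s'_def)
qed

lemma min_term_add_le_shift:
  fixes a b d :: real
  assumes "113/500 < a" "0 \<le> b" "0 \<le> d" "3 * a + b + 2 * d = 1"
  shows "min_term a b + d \<le> min_term a (b + 2 * d)"
proof -
  have "3 * hm a (b + 2 * d) \<le> 1287/2500 * (2 * a + (b + 2 * d))"
    using assms by (intro hm_le_linear) auto
  then have "3 * hm a (b + 2 * d) < 0.465"
    using assms by simp
  then have "min_term a (b + 2 * d) = min (3 * hm a (b + 2 * d)) (3 * a * sqrt (b + 2 * d))"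
    by (simp add: min_term_def)
  then show ?thesis
    using hm_add_le_shift [OF assms] sqrt_add_le_shift [OF assms]
      min_term_le_hm [of a b] min_term_le_sqrt [of a b]
    by linarith
qed

lemma g_diagonal_add_le_half:
  fixes a b d :: real
  assumes "0 \<le> a" "0 \<le> b" "0 \<le> d" "3 * a + b + 2 * d = 1"
  shows "g a b a + d \<le> 1/2"
proof (cases "a \<le> 113/500")
  case True
  have "a * sqrt a \<le> a * (2377/5000)"
    using True assms(1) by (intro mult_sqrt_le_mult) (simp_all add: power2_eq_square)
  moreover have "6 * (a * sqrt b) \<le> 9 * a\<^sup>2 + b"
  proof -
    have "0 \<le> (3 * a - sqrt b)\<^sup>2"
      by simp
    also have "\<dots> = 9 * a\<^sup>2 - 6 * (a * sqrt b) + b"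
      using assms(2) by (simp add: power2_eq_square algebra_simps)
    finally show ?thesis
      by simp
  qed
  moreover have "a * (9/2 * a + 2377/5000 - 3/2) \<le> 0"
    using True assms(1) by (intro mult_nonneg_nonpos) auto
  ultimately show ?thesis
    using assms min_term_le_sqrt [of a b] by (simp add: g_eq_min_term power2_eq_square algebra_simps)
next
  case False
  have "g a b a + d \<le> g a (b + 2 * d) a"
    using min_term_add_le_shift [OF _ assms(2-4)] False assms by (simp add: g_eq_min_term)
  also have "\<dots> \<le> 1/2"
    using assms by (intro g_le_half) auto
  finally show ?thesis .
qed

lemma g_zero_add_le_half:
  fixes a b d :: real
  assumes "0 \<le> a" "0 \<le> b" "0 \<le> d" "2 * a + b + 2 * d = 1" "d \<le> 4/25"
  shows "g a b 0 + 2 * (d * sqrt d) + d / 5 \<le> 1/2"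
proof -
  consider "d \<le> 1/20" | "1/20 \<le> d" "d \<le> 3/25" | "3/25 \<le> d"
    by linarith
  then have "2 * (d * sqrt d) + d / 5 + min_term a b \<le> 1/2"
  proof cases
    case 1
    then have "d * sqrt d \<le> d * (2237/10000)"
      using assms(3) by (intro mult_sqrt_le_mult) (simp_all add: power_divide)
    then show ?thesis
      using 1 assms(3) min_term_le_cap [of a b] by linarith
  next
    case 2
    then have "(3/25 - 1/20) * (d * sqrt d)
        \<le> (3/25 - d) * (1/20 * (2237/10000)) + (d - 1/20) * (3/25 * (34642/100000))"
      by (intro mult_sqrt_le_secant) (simp_all add: power_divide)
    moreover have "min_term a b \<le> 1287/2500 * (1 - 2 * d)"
      using min_term_le_hm [of a b] hm_le_linear [OF assms(1,2)] assms(4) by simp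
    ultimately show ?thesis
      using 2 by (simp add: field_simps)
  next
    case 3
    define x where "x = (2 * a + b) / 3"
    have "3 * x = 1 - 2 * d"
      using assms(4) by (simp add: x_def)
    have "(4/25 - 3/25) * (d * sqrt d) \<le> (4/25 - d) * (3/25 * (34642/100000)) + (d - 3/25) * (4/25 * (2/5))"
      using 3 assms(5) by (intro mult_sqrt_le_secant) (simp_all add: power_divide)
    moreover have "(19/75 - 17/75) * (x * sqrt x)
        \<le> (19/75 - x) * (17/75 * (4761/10000)) + (x - 17/75) * (19/75 * (50333/100000))"
      using 3 assms(5) \<open>3 * x = 1 - 2 * d\<close> by (intro mult_sqrt_le_secant) (simp_all add: power_divide)
    moreover have "min_term a b \<le> 3 * (x * sqrt x)"
      using min_term_le_sqrt [of a b] mult_sqrt_le_amgm [OF assms(1,2)] by (simp add: x_def)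
    ultimately show ?thesis
      using 3 assms(5) \<open>3 * x = 1 - 2 * d\<close> by (simp add: field_simps)
  qed
  then show ?thesis
    by (simp add: g_eq_min_term)
qed

lemma g_le_of_small_mass:
  fixes a b c :: real
  assumes "0 \<le> a" "0 \<le> b" "0 \<le> c" "c \<le> a" "2 * a + b + c \<le> 17/25"
  shows "g a b c \<le> 33/100"
proof -
  define x where "x = (17/25 - c) / 3"
  have "c \<le> 17/75"
    using assms by linarith
  have "a * sqrt b \<le> (2 * a + b) / 3 * sqrt ((2 * a + b) / 3)"
    using assms(1,2) by (rule mult_sqrt_le_amgm)
  also have "\<dots> \<le> x * sqrt x"
    using assms by (intro mult_mono real_sqrt_le_mono) (simp_all add: x_def)
  finally have "a * sqrt b \<le> x * sqrt x" .
  moreover have "(17/75 - 0) * (c * sqrt c) \<le> (17/75 - c) * (0 * 0) + (c - 0) * (17/75 * (4761/10000))"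
    using assms(3) \<open>c \<le> 17/75\<close> by (intro mult_sqrt_le_secant) (simp_all add: power_divide)
  moreover have "(17/75 - 34/225) * (x * sqrt x)
      \<le> (17/75 - x) * (34/225 * (38874/100000)) + (x - 34/225) * (17/75 * (4761/10000))"
    using assms(3) \<open>c \<le> 17/75\<close> by (intro mult_sqrt_le_secant) (simp_all add: x_def power_divide)
  moreover have "3 * x = 17/25 - c"
    by (simp add: x_def)
  ultimately have "c * sqrt c + min_term a b \<le> 33/100"
    using assms(3) \<open>c \<le> 17/75\<close> min_term_le_sqrt [of a b] by (simp add: field_simps)
  then show ?thesis
    using assms(3) by (simp add: g_eq_min_term)
qed

section \<open>Convexity in \<open>c\<close> and the main result\<close>

text \<open>\<open>mass_split (c + 2 * d) c = F c + 2 F d + d / 5\<close>.\<close>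
definition mass_split :: "real \<Rightarrow> real \<Rightarrow> real" where
  "mass_split u x = x * sqrt x + 2 * ((u - x) / 2 * sqrt ((u - x) / 2)) + (u - x) / 10"

lemma convex_on_mass_split: "convex_on {0..u} (mass_split u)"
proof -
  have "convex_on {0..u} (\<lambda>x. x * sqrt x)"
    by (rule convex_on_subset [OF convex_on_mult_sqrt]) auto
  moreover have "convex_on {0..u} (\<lambda>x. (u - x) / 2 * sqrt ((u - x) / 2))"
    by (rule convex_on_compose_affine [OF convex_on_mult_sqrt, where h = "\<lambda>x. (u - x) / 2"])
      (auto simp: field_simps)
  moreover have "convex_on {0..u} (\<lambda>x. (u - x) / 10)"
    by (rule convex_on_compose_affine [where f = "\<lambda>x. x" and S = UNIV])
      (auto simp: convex_on_ident field_simps)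
  ultimately show ?thesis
    unfolding mass_split_def [abs_def] by (intro convex_on_add convex_on_cmul) auto
qed

lemma mass_split_lower_end:
  fixes a b u :: real
  assumes "0 \<le> a" "0 \<le> b" "0 \<le> u" "2 * a + b + u = 1" "max 0 (u - 8/25) \<le> a"
  shows "mass_split u (max 0 (u - 8/25)) + min_term a b \<le> 1/2"
proof (cases "u \<le> 8/25")
  case True
  have "g a b 0 + 2 * (u / 2 * sqrt (u / 2)) + u / 2 / 5 \<le> 1/2"
    using assms True by (intro g_zero_add_le_half) (simp_all add: field_simps)
  with True show ?thesis
    by (simp add: mass_split_def g_eq_min_term)
next
  case False
  have "sqrt (4/25) = (2/5 :: real)"
    by (simp add: real_sqrt_divide)
  with False have "mass_split u (u - 8/25) = (u - 8/25) * sqrt (u - 8/25) + 4/25"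
    by (simp add: mass_split_def)
  moreover have "g a b (u - 8/25) \<le> 33/100"
    using assms False by (intro g_le_of_small_mass) simp_all
  ultimately show ?thesis
    using False by (simp add: g_eq_min_term)
qed

lemma mass_split_upper_end:
  fixes a b u :: real
  assumes "0 \<le> a" "0 \<le> b" "0 \<le> u" "2 * a + b + u = 1" "u - a \<le> 8/25"
  shows "mass_split u (min a u) + min_term a b \<le> 1/2"
proof (cases "a \<le> u")
  case True
  define e where "e = (u - a) / 2"
  have "0 \<le> e" "e \<le> 4/25" "3 * a + b + 2 * e = 1"
    using assms True by (simp_all add: e_def field_simps)
  then have "e * sqrt e \<le> e * (2/5)"
    by (intro mult_sqrt_le_mult) (simp_all add: power_divide)
  moreover have "g a b a + e \<le> 1/2"
    using assms \<open>0 \<le> e\<close> \<open>3 * a + b + 2 * e = 1\<close> by (intro g_diagonal_add_le_half)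
  moreover have "mass_split u (min a u) = a * sqrt a + 2 * (e * sqrt e) + e / 5"
    using True by (simp add: mass_split_def e_def)
  ultimately show ?thesis
    using assms(1) by (simp add: g_eq_min_term)
next
  case False
  then have "g a b u \<le> 1/2"
    using assms by (intro g_le_half) simp_all
  with False show ?thesis
    using assms(3) by (simp add: mass_split_def g_eq_min_term)
qed

text \<open>The end points \<open>l = 0\<close>, \<open>l = u - 8/25\<close>, \<open>r = a\<close>, \<open>r = u\<close> of the range of \<open>c\<close> lie on the faces
  \<open>c = 0\<close>, \<open>d = 4/25\<close>, \<open>c = a\<close>, \<open>d = 0\<close>.\<close>
lemma g_add_le_half:
  fixes a b c d :: real
  assumes "0 \<le> a" "0 \<le> b" "0 \<le> c" "0 \<le> d" "2 * a + b + c + 2 * d = 1" "c \<le> a" "d \<le> 4/25"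
  shows "g a b c + 2 * (d * sqrt d) + d / 5 \<le> 1/2"
proof -
  define u where "u = c + 2 * d"
  define l r where "l = max 0 (u - 8/25)" and "r = min a u"
  have "0 \<le> l" "l \<le> c" "c \<le> r" "r \<le> u"
    using assms by (simp_all add: l_def r_def u_def)
  have "convex_on {l..r} (mass_split u)"
    using convex_on_subset [OF convex_on_mass_split] \<open>0 \<le> l\<close> \<open>r \<le> u\<close> by simp
  then have "mass_split u c \<le> max (mass_split u l) (mass_split u r)"
    using \<open>l \<le> c\<close> \<open>c \<le> r\<close> by (intro convex_on_le_max) auto
  moreover have "mass_split u l + min_term a b \<le> 1/2"
    using assms \<open>l \<le> c\<close> unfolding l_def by (intro mass_split_lower_end) (simp_all add: u_def)
  moreover have "mass_split u r + min_term a b \<le> 1/2"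
    using assms unfolding r_def by (intro mass_split_upper_end) (simp_all add: u_def)
  moreover have "mass_split u c = c * sqrt c + 2 * (d * sqrt d) + d / 5"
    by (simp add: mass_split_def u_def)
  ultimately show ?thesis
    using assms(3) by (simp add: g_eq_min_term)
qed

lemma f_eq_min: "0 \<le> d \<Longrightarrow> f a b c d = min (2 * (d * sqrt d) + g a b c) (1/4 + 3/4 * g a b c)"
  by (simp add: f_def powr_three_halves)

lemma f_less_half:
  fixes a b c d :: real
  assumes "0 \<le> a" "0 \<le> b" "0 \<le> c" "0 \<le> d" "2 * a + b + c + 2 * d = 1" "c \<le> a"
    and "(a, b, c, d) \<noteq> (1/4, 1/4, 1/4, 0)"
  shows "f a b c d < 1/2"
proof -
  consider "4/25 < d" | "0 < d" "d \<le> 4/25" | "d = 0"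
    using assms(4) by linarith
  then show ?thesis
  proof cases
    case 1
    then have "g a b c \<le> 33/100"
      using assms by (intro g_le_of_small_mass) auto
    moreover have "f a b c d \<le> 1/4 + 3/4 * g a b c"
      using assms(4) by (simp add: f_eq_min)
    ultimately show ?thesis
      by linarith
  next
    case 2
    then have "g a b c + 2 * (d * sqrt d) + d / 5 \<le> 1/2"
      using assms by (intro g_add_le_half) auto
    moreover have "f a b c d \<le> 2 * (d * sqrt d) + g a b c"
      using assms(4) by (simp add: f_eq_min)
    ultimately show ?thesis
      using 2 by linarith
  next
    case 3
    then have "g a b c < 1/2"
      using assms by (intro g_less_half) auto
    then show ?thesis
      using 3 by (simp add: f_eq_min)
  qed
qed

lemma f_quarter: "f (1/4) (1/4) (1/4) 0 = 1/2"
  using g_quarter by (simp add: f_def)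

theorem lemma5p6:
  fixes a b c d :: real
  assumes "a \<ge> 0" "b \<ge> 0" "c \<ge> 0" "d \<ge> 0"
    and "2 * a + b + c + 2 * d = 1"
    and "c \<le> a"
  shows "f a b c d \<le> 1/2 \<and> (f a b c d = 1/2 \<longleftrightarrow> (a, b, c, d) = (1/4, 1/4, 1/4, 0))"
proof (cases "(a, b, c, d) = (1/4, 1/4, 1/4, 0)")
  case True
  then have "a = 1/4" "b = 1/4" "c = 1/4" "d = 0"
    by simp_all
  with True show ?thesis
    using f_quarter by (simp only:) simp
next
  case False
  then show ?thesis
    using f_less_half [OF assms False] by simp
qed

end
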